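(* Let $\alpha,g_0,\kappa_0,b_0>0$ and $\lambda>2b_0$. For $\Delta\tau>0$ put $K=\frac{2\lambda\kappa_0}{\alpha g_0\Delta\tau}$ and $C=C(\Delta\tau)=\frac{\alpha g_0\Delta\tau}{2\lambda\kappa_0}$, and for real nonzero $b\neq b'$ define $$S_{+-}(b,b')=\frac{C^2}{b_0\pi}\int_{-\infty}^{\infty}e^{-i\lambda b''}\,\frac{\sin^2(b_0b'')}{b''^2}\,\frac{\sin[K(b-b'')]}{b-b''}\,\frac{\sin[K(b''-b')]}{b''-b'}\,db''.$$ Then $$S_{+-}(b,b')=\begin{cases}G_1(b,b'), & 0<\Delta\tau\le\frac{4\lambda\kappa_0}{\alpha g_0(\lambda+2b_0)},\\ G_2(b,b'), & \frac{4\lambda\kappa_0}{\alpha g_0(\lambda+2b_0)}\le\Delta\tau\le\frac{4\kappa_0}{\alpha g_0},\\ G_3(b,b'), & \frac{4\kappa_0}{\alpha g_0}\le\Delta\tau\le\frac{4\lambda\kappa_0}{\alpha g_0(\lambda-2b_0)},\\ 0, & \Delta\tau\ge\frac{4\lambda\kappa_0}{\alpha g_0(\lambda-2b_0)},\end{cases}$$ where $G_1=\frac{iC^2}{2b_0}\Big[\frac{e^{-i\lambda b'-iK(b-b')}}{b-b'}\frac{\sin^2(b_0b')}{b'^2}-\frac{e^{-i\lambda b+iK(b-b')}}{b-b'}\frac{\sin^2(b_0b)}{b^2}\Big]$, $G_2=\frac{C^2}{8b_0}\Big[\frac{f(b')e^{-iK(b-b')}}{b-b'}-\frac{f(b)e^{iK(b-b')}}{b-b'}-\frac{\phi_+(b,b')e^{-iK(b+b')}}{bb'}\Big]$,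 $G_3=\frac{C^2}{8b_0}\Big[\frac{h(b)e^{iK(b-b')}}{b-b'}-\frac{h(b')e^{-iK(b-b')}}{b-b'}+\frac{\phi_-(b,b')e^{-iK(b+b')}}{bb'}\Big]$, with $f(x)=i\,e^{-i\lambda x}[4\sin^2(b_0x)+e^{-2ib_0x}]/x^2$, $h(x)=i\,e^{-i(\lambda-2b_0)x}/x^2$, and $\phi_\pm(b,b')=\pm2b_0+\lambda+i\frac{b+b'}{bb'}-2K$. In particular the pointer states are exactly orthogonal ($S_{+-}\equiv0$) for $\Delta\tau\ge\frac{4\lambda\kappa_0}{\alpha g_0(\lambda-2b_0)}$.
   Context: This is the orthogonality function for the two pointer states in the measurement of $S_z$ of a spin-1/2 particle with probe initial state $\frac{1}{\sqrt{\kappa_0\pi}}\frac{\sin(\kappa_0 q)}{q}$ and pointer initial state $\frac{1}{\sqrt{b_0\pi}}\frac{\sin(b_0 b)}{b}$. *)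

theory Defs
  imports "HOL-Analysis.Analysis"
begin

definition Kc :: "real \<Rightarrow> real \<Rightarrow> real \<Rightarrow> real \<Rightarrow> real \<Rightarrow> real" where
  "Kc al g0 k0 lam dt = 2 * lam * k0 / (al * g0 * dt)"

definition Cc :: "real \<Rightarrow> real \<Rightarrow> real \<Rightarrow> real \<Rightarrow> real \<Rightarrow> real" where
  "Cc al g0 k0 lam dt = al * g0 * dt / (2 * lam * k0)"

definition Spm_integrand ::
  "real \<Rightarrow> real \<Rightarrow> real \<Rightarrow> real \<Rightarrow> real \<Rightarrow> real \<Rightarrow> real \<Rightarrow> real \<Rightarrow> real \<Rightarrow> complex" where
  "Spm_integrand al g0 k0 b0 lam dt b b' x =
     (let K = Kc al g0 k0 lam dt in
      exp (- \<i> * complex_of_real (lam * x)) *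
      complex_of_real ((sin (b0 * x))\<^sup>2 / x\<^sup>2 * (sin (K * (b - x)) / (b - x))
                        * (sin (K * (x - b')) / (x - b'))))"

definition Spm ::
  "real \<Rightarrow> real \<Rightarrow> real \<Rightarrow> real \<Rightarrow> real \<Rightarrow> real \<Rightarrow> real \<Rightarrow> real \<Rightarrow> complex" where
  "Spm al g0 k0 b0 lam dt b b' =
     complex_of_real ((Cc al g0 k0 lam dt)\<^sup>2 / (b0 * pi)) *
     (LINT x|lborel. Spm_integrand al g0 k0 b0 lam dt b b' x)"

definition f_aux :: "real \<Rightarrow> real \<Rightarrow> real \<Rightarrow> complex" where
  "f_aux b0 lam x = \<i> * exp (- \<i> * complex_of_real (lam * x)) *
     (complex_of_real (4 * (sin (b0 * x))\<^sup>2) + exp (- 2 * \<i> * complex_of_real (b0 * x)))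
     / complex_of_real (x\<^sup>2)"

definition h_aux :: "real \<Rightarrow> real \<Rightarrow> real \<Rightarrow> complex" where
  "h_aux b0 lam x = \<i> * exp (- \<i> * complex_of_real ((lam - 2 * b0) * x)) / complex_of_real (x\<^sup>2)"

text \<open>phi_plus (s = 1) and phi_minus (s = -1): s*2*b0 + lam + i (b+b')/(b b') - 2K.\<close>
definition phi_aux :: "real \<Rightarrow> real \<Rightarrow> real \<Rightarrow> real \<Rightarrow> real \<Rightarrow> real \<Rightarrow> complex" where
  "phi_aux s b0 lam K b b' = complex_of_real (s * 2 * b0 + lam)
     + \<i> * complex_of_real ((b + b') / (b * b')) - complex_of_real (2 * K)"

definition G1 :: "real \<Rightarrow> real \<Rightarrow> real \<Rightarrow> real \<Rightarrow> real \<Rightarrow> real \<Rightarrow> real \<Rightarrow> real \<Rightarrow> complex" where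
  "G1 al g0 k0 b0 lam dt b b' =
    (let K = Kc al g0 k0 lam dt; C = Cc al g0 k0 lam dt in
     \<i> * complex_of_real (C\<^sup>2 / (2 * b0)) *
     (exp (- \<i> * complex_of_real (lam * b') - \<i> * complex_of_real (K * (b - b')))
        / complex_of_real (b - b') * complex_of_real ((sin (b0 * b'))\<^sup>2 / b'\<^sup>2)
      - exp (- \<i> * complex_of_real (lam * b) + \<i> * complex_of_real (K * (b - b')))
        / complex_of_real (b - b') * complex_of_real ((sin (b0 * b))\<^sup>2 / b\<^sup>2)))"

definition G2 :: "real \<Rightarrow> real \<Rightarrow> real \<Rightarrow> real \<Rightarrow> real \<Rightarrow> real \<Rightarrow> real \<Rightarrow> real \<Rightarrow> complex" where
  "G2 al g0 k0 b0 lam dt b b' =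
    (let K = Kc al g0 k0 lam dt; C = Cc al g0 k0 lam dt in
     complex_of_real (C\<^sup>2 / (8 * b0)) *
     (f_aux b0 lam b' * exp (- \<i> * complex_of_real (K * (b - b'))) / complex_of_real (b - b')
      - f_aux b0 lam b * exp (\<i> * complex_of_real (K * (b - b'))) / complex_of_real (b - b')
      - phi_aux 1 b0 lam K b b' * exp (- \<i> * complex_of_real (K * (b + b')))
          / complex_of_real (b * b')))"

definition G3 :: "real \<Rightarrow> real \<Rightarrow> real \<Rightarrow> real \<Rightarrow> real \<Rightarrow> real \<Rightarrow> real \<Rightarrow> real \<Rightarrow> complex" where
  "G3 al g0 k0 b0 lam dt b b' =
    (let K = Kc al g0 k0 lam dt; C = Cc al g0 k0 lam dt in
     complex_of_real (C\<^sup>2 / (8 * b0)) *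
     (h_aux b0 lam b * exp (\<i> * complex_of_real (K * (b - b'))) / complex_of_real (b - b')
      - h_aux b0 lam b' * exp (- \<i> * complex_of_real (K * (b - b'))) / complex_of_real (b - b')
      + phi_aux (-1) b0 lam K b b' * exp (- \<i> * complex_of_real (K * (b + b')))
          / complex_of_real (b * b')))"

end

theory Submission
  imports Defs "HOL-Complex_Analysis.Complex_Analysis" "HOL-Probability.Sinc_Integral" "HOL-Real_Asymp.Real_Asymp"
begin

(* The integrand extends to an entire function, so the line of integration can be moved from the real
   axis to Im z = -1. There sin (b0 z)^2 sin (K (z - b)) sin (K (z - b')) is expanded into nine
   exponentials exp (i nu z), and every exp (i nu z) / (z^2 (z - b) (z - b')) is integrated separately:
   for nu >= 0 the line is closed in the upper half plane and picks up the residues at 0, b and b', for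
   nu < 0 it is closed in the lower half plane and contributes nothing. Since lam > 2 b0, only the
   frequencies 2K - lam + 2 b0, 2K - lam and 2K - lam - 2 b0 can be nonnegative; how many of them are
   nonnegative decides the regime, and their residues combine into G1, G2, G3 or 0. *)

lemma exp_i_of_real: "exp (\<i> * complex_of_real t) = cis t"
  by (simp add: cis_conv_exp)

lemma exp_minus_i_of_real: "exp (- \<i> * complex_of_real t) = cis (- t)"
  by (simp add: cis_conv_exp)

lemma of_real_cos_eq_cis: "complex_of_real (cos t) = (cis t + cis (- t)) / 2"
  by (simp add: complex_eq_iff)

lemma of_real_sin_sq_eq_cis: "complex_of_real ((sin t)\<^sup>2) = (2 - cis (2 * t) - cis (- (2 * t))) / 4"
  by (simp add: complex_eq_iff cos_double_sin)

lemma sum_neg1_0_1: "(\<Sum>j\<in>{-1, 0, 1 :: int}. f j) = f (- 1) + f 0 + f 1"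
  by (simp add: add.assoc)

lemma eventually_le_real_of_nat: "eventually (\<lambda>n. c \<le> real n) sequentially"
  by real_asymp

lemma tendsto_zero_by_eventual_bound:
  fixes f :: "real \<Rightarrow> 'a::real_normed_vector"
  assumes "\<And>T. c \<le> T \<Longrightarrow> norm (f T) \<le> g T" and "(\<lambda>n. g (real n)) \<longlonglongrightarrow> 0"
  shows "(\<lambda>n. f (real n)) \<longlonglongrightarrow> 0"
proof (rule Lim_null_comparison[OF _ assms(2)])
  show "eventually (\<lambda>n. norm (f (real n)) \<le> g (real n)) sequentially"
    using eventually_le_real_of_nat[of c] by (rule eventually_mono) (rule assms(1))
qed

lemma contour_integral_rectpath_sides:
  assumes "continuous_on (path_image (rectpath (Complex x1 y1) (Complex x2 y2))) f"
  shows "contour_integral (rectpath (Complex x1 y1) (Complex x2 y2)) f =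
       contour_integral (linepath (Complex x1 y1) (Complex x2 y1)) f
     + contour_integral (linepath (Complex x2 y1) (Complex x2 y2)) f
     - contour_integral (linepath (Complex x1 y2) (Complex x2 y2)) f
     - contour_integral (linepath (Complex x1 y1) (Complex x1 y2)) f"
proof -
  define a1 a2 a3 a4 where "a1 = Complex x1 y1" "a2 = Complex x2 y1" "a3 = Complex x2 y2" "a4 = Complex x1 y2"
  have rect: "rectpath a1 a3 = linepath a1 a2 +++ linepath a2 a3 +++ linepath a3 a4 +++ linepath a4 a1"
    by (simp add: rectpath_def Let_def a1_a2_a3_a4_def)
  have "path_image (rectpath a1 a3)
      = closed_segment a1 a2 \<union> closed_segment a2 a3 \<union> closed_segment a3 a4 \<union> closed_segment a4 a1"
    unfolding rect by (simp add: path_image_join Un_assoc)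
  then have cont: "continuous_on (closed_segment a1 a2) f" "continuous_on (closed_segment a2 a3) f"
      "continuous_on (closed_segment a3 a4) f" "continuous_on (closed_segment a4 a1) f"
    using assms unfolding a1_a2_a3_a4_def by (auto intro: continuous_on_subset)
  then have "contour_integral (rectpath a1 a3) f = contour_integral (linepath a1 a2) f
      + (contour_integral (linepath a2 a3) f + (contour_integral (linepath a3 a4) f + contour_integral (linepath a4 a1) f))"
    unfolding rect by (simp add: contour_integrable_joinI contour_integrable_continuous_linepath)
  moreover have "contour_integral (linepath a3 a4) f = - contour_integral (linepath a4 a3) f"
    "contour_integral (linepath a4 a1) f = - contour_integral (linepath a1 a4) f"
    using cont(3,4) by (simp_all add: contour_integral_reverse_linepath)
  ultimately show ?thesis
    unfolding a1_a2_a3_a4_def by simp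
qed

lemma norm_contour_integral_vertical_le:
  assumes "y1 \<le> y2" "continuous_on S f"
    and "\<And>y. y1 \<le> y \<Longrightarrow> y \<le> y2 \<Longrightarrow> Complex x y \<in> S \<and> norm (f (Complex x y)) \<le> B"
  shows "norm (contour_integral (linepath (Complex x y1) (Complex x y2)) f) \<le> B * (y2 - y1)"
proof -
  have seg: "closed_segment (Complex x y1) (Complex x y2) = {Complex x y |y. y1 \<le> y \<and> y \<le> y2}"
    using assms(1) by (auto simp: closed_segment_same_Re closed_segment_eq_real_ivl complex_eq_iff)
  have "norm (contour_integral (linepath (Complex x y1) (Complex x y2)) f) \<le> B * norm (Complex x y2 - Complex x y1)"
  proof (rule contour_integral_bound_linepath)
    show "f contour_integrable_on linepath (Complex x y1) (Complex x y2)"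
      using assms(3) unfolding seg
      by (intro contour_integrable_continuous_linepath continuous_on_subset[OF assms(2)]) (auto simp: seg)
    show "0 \<le> B"
      using assms(1) assms(3)[of y1] norm_ge_zero order_trans by blast
  qed (use assms(3) seg in auto)
  then show ?thesis
    using assms(1) by (simp add: norm_complex_def)
qed

lemma norm_contour_integral_horizontal_le:
  assumes "x1 \<le> x2" "continuous_on S f"
    and "\<And>x. x1 \<le> x \<Longrightarrow> x \<le> x2 \<Longrightarrow> Complex x y \<in> S \<and> norm (f (Complex x y)) \<le> B"
  shows "norm (contour_integral (linepath (Complex x1 y) (Complex x2 y)) f) \<le> B * (x2 - x1)"
proof -
  have seg: "closed_segment (Complex x1 y) (Complex x2 y) = {Complex x y |x. x1 \<le> x \<and> x \<le> x2}"
    using assms(1) by (auto simp: closed_segment_same_Im closed_segment_eq_real_ivl complex_eq_iff)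
  have "norm (contour_integral (linepath (Complex x1 y) (Complex x2 y)) f) \<le> B * norm (Complex x2 y - Complex x1 y)"
  proof (rule contour_integral_bound_linepath)
    show "f contour_integrable_on linepath (Complex x1 y) (Complex x2 y)"
      using assms(3) unfolding seg
      by (intro contour_integrable_continuous_linepath continuous_on_subset[OF assms(2)]) (auto simp: seg)
    show "0 \<le> B"
      using assms(1) assms(3)[of x1] norm_ge_zero order_trans by blast
  qed (use assms(3) seg in auto)
  then show ?thesis
    using assms(1) by (simp add: norm_complex_def)
qed

lemma has_contour_integral_rectpath_pole:
  assumes "f holomorphic_on UNIV" "a \<in> box a1 a3"
  shows "((\<lambda>z. f z / (z - a) ^ Suc n) has_contour_integral 2 * pi * \<i> * (deriv ^^ n) f a / fact n)
           (rectpath a1 a3)"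
proof -
  let ?f = "\<lambda>z. f z / (z - a) ^ Suc n"
  have avoid: "path_image (rectpath a1 a3) \<subseteq> UNIV - {a}"
    using assms(2) by (auto simp: path_image_rectpath_cbox_minus_box in_box_complex_iff)
  have holo: "?f holomorphic_on UNIV - {a}"
    using assms(1) by (auto intro!: holomorphic_intros intro: holomorphic_on_subset)
  have "contour_integral (rectpath a1 a3) ?f
      = 2 * pi * \<i> * (\<Sum>p\<in>{a}. winding_number (rectpath a1 a3) p * residue ?f p)"
    by (rule Residue_theorem[OF _ _ _ holo]) (use avoid in auto)
  moreover have "residue ?f a = (deriv ^^ n) f a / fact n"
    by (rule residue_holomorphic_over_power[OF open_UNIV _ assms(1)]) simp
  moreover have "?f contour_integrable_on rectpath a1 a3"
    by (rule contour_integrable_holomorphic_simple[OF holo]) (use avoid in auto)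
  ultimately show ?thesis
    using winding_number_rectpath[OF assms(2)] has_contour_integral_integral by fastforce
qed

section \<open>The rational kernel and its line integrals\<close>

definition pole_kernel :: "real \<Rightarrow> real \<Rightarrow> complex \<Rightarrow> complex" where
  "pole_kernel b b' z = 1 / (z\<^sup>2 * (z - of_real b) * (z - of_real b'))"

definition exp_kernel :: "real \<Rightarrow> real \<Rightarrow> real \<Rightarrow> complex \<Rightarrow> complex" where
  "exp_kernel b b' \<nu> z = exp (\<i> * of_real \<nu> * z) * pole_kernel b b' z"

definition kernel_residue_sum :: "real \<Rightarrow> real \<Rightarrow> real \<Rightarrow> complex" where
  "kernel_residue_sum b b' \<nu> = \<i> * of_real \<nu> / of_real (b * b') + of_real ((b + b') / (b * b')\<^sup>2)
     + cis (\<nu> * b) / of_real (b\<^sup>2 * (b - b')) + cis (\<nu> * b') / of_real (b'\<^sup>2 * (b' - b))"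

lemma kernel_residue_sum_0:
  assumes "b \<noteq> 0" "b' \<noteq> 0" "b \<noteq> b'"
  shows "kernel_residue_sum b b' 0 = 0"
proof -
  have "(b + b') / (b * b')\<^sup>2 + 1 / (b\<^sup>2 * (b - b')) + 1 / (b'\<^sup>2 * (b' - b)) = 0"
    using assms by (simp add: divide_simps) algebra
  then have "complex_of_real ((b + b') / (b * b')\<^sup>2 + 1 / (b\<^sup>2 * (b - b')) + 1 / (b'\<^sup>2 * (b' - b))) = 0"
    by simp
  then show ?thesis
    unfolding kernel_residue_sum_def by (simp add: of_real_add)
qed

lemma pole_kernel_partial_fractions:
  assumes "b \<noteq> 0" "b' \<noteq> 0" "b \<noteq> b'" "z \<noteq> 0" "z \<noteq> of_real b" "z \<noteq> of_real b'"
  shows "pole_kernel b b' z = of_real (1 / (b * b')) / z\<^sup>2 + of_real ((b + b') / (b * b')\<^sup>2) / z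
     + of_real (1 / (b\<^sup>2 * (b - b'))) / (z - of_real b) + of_real (1 / (b'\<^sup>2 * (b' - b))) / (z - of_real b')"
proof -
  have "1 / (z\<^sup>2 * (z - p) * (z - q)) = (1 / (p * q)) / z\<^sup>2 + ((p + q) / (p * q)\<^sup>2) / z
     + (1 / (p\<^sup>2 * (p - q))) / (z - p) + (1 / (q\<^sup>2 * (q - p))) / (z - q)"
    if "p \<noteq> 0" "q \<noteq> 0" "p \<noteq> q" "z \<noteq> p" "z \<noteq> q" for p q :: complex
  proof -
    have "z - p \<noteq> 0" "z - q \<noteq> 0" "p - q \<noteq> 0" "q - p \<noteq> 0"
      using that by auto
    then show ?thesis
      using that \<open>z \<noteq> 0\<close> by (simp add: divide_simps) algebra
  qed
  from this[of "of_real b" "of_real b'"] show ?thesis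
    using assms unfolding pole_kernel_def by simp
qed

lemma norm_pole_kernel_le:
  assumes "T > 0" "2 * \<bar>b\<bar> \<le> T" "2 * \<bar>b'\<bar> \<le> T" "T \<le> norm z"
  shows "norm (pole_kernel b b' z) \<le> 4 / T ^ 4"
proof -
  have "norm (z - of_real b) \<ge> T / 2" "norm (z - of_real b') \<ge> T / 2"
    using norm_triangle_ineq2[of z "of_real b"] norm_triangle_ineq2[of z "of_real b'"] assms
    by (auto simp: norm_of_real)
  moreover have "norm (z\<^sup>2) \<ge> T\<^sup>2"
    using assms by (simp add: norm_power power_mono)
  ultimately have "T\<^sup>2 * (T / 2) * (T / 2) \<le> norm (z\<^sup>2 * (z - of_real b) * (z - of_real b'))"
    using assms unfolding norm_mult by (intro mult_mono) auto
  then have "T ^ 4 / 4 \<le> norm (z\<^sup>2 * (z - of_real b) * (z - of_real b'))"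
    by (simp add: power2_eq_square power4_eq_xxxx)
  with \<open>T > 0\<close> show ?thesis
    by (simp add: pole_kernel_def norm_divide divide_simps)
qed

lemma norm_exp_kernel_le:
  assumes "T > 0" "2 * \<bar>b\<bar> \<le> T" "2 * \<bar>b'\<bar> \<le> T" "T \<le> norm z" "- \<nu> * Im z \<le> c"
  shows "norm (exp_kernel b b' \<nu> z) \<le> exp c * (4 / T ^ 4)"
proof -
  have "norm (exp_kernel b b' \<nu> z) = exp (- \<nu> * Im z) * norm (pole_kernel b b' z)"
    by (simp add: exp_kernel_def norm_mult)
  also have "\<dots> \<le> exp c * (4 / T ^ 4)"
    using norm_pole_kernel_le[OF assms(1-4)] assms(5) by (intro mult_mono) auto
  finally show ?thesis .
qed

lemma exp_kernel_continuous_on: "continuous_on (UNIV - {0, of_real b, of_real b'}) (exp_kernel b b' \<nu>)"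
  unfolding exp_kernel_def pole_kernel_def by (intro continuous_intros) auto

lemma has_contour_integral_rectpath_exp_kernel:
  assumes "b \<noteq> 0" "b' \<noteq> 0" "b \<noteq> b'"
    and "0 \<in> box a1 a3" "of_real b \<in> box a1 a3" "of_real b' \<in> box a1 a3"
  shows "(exp_kernel b b' \<nu> has_contour_integral 2 * pi * \<i> * kernel_residue_sum b b' \<nu>) (rectpath a1 a3)"
proof -
  define c2 c1 c c' where "c2 = complex_of_real (1 / (b * b'))" and "c1 = complex_of_real ((b + b') / (b * b')\<^sup>2)"
    and "c = complex_of_real (1 / (b\<^sup>2 * (b - b')))" and "c' = complex_of_real (1 / (b'\<^sup>2 * (b' - b)))"
  let ?e = "\<lambda>z. exp (\<i> * of_real \<nu> * z)"
  let ?pf = "\<lambda>z. c2 * (?e z / (z - 0) ^ Suc 1) + c1 * (?e z / (z - 0) ^ Suc 0)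
      + c * (?e z / (z - of_real b) ^ Suc 0) + c' * (?e z / (z - of_real b') ^ Suc 0)"
  have "?e holomorphic_on UNIV"
    by (intro holomorphic_intros)
  moreover have "deriv ?e 0 = \<i> * of_real \<nu>"
    by (rule DERIV_imp_deriv) (auto intro!: derivative_eq_intros)
  ultimately have poles:
    "((\<lambda>z. ?e z / (z - 0) ^ Suc 1) has_contour_integral 2 * pi * \<i> * (\<i> * of_real \<nu>)) (rectpath a1 a3)"
    "((\<lambda>z. ?e z / (z - 0) ^ Suc 0) has_contour_integral 2 * pi * \<i>) (rectpath a1 a3)"
    "((\<lambda>z. ?e z / (z - of_real b) ^ Suc 0) has_contour_integral 2 * pi * \<i> * cis (\<nu> * b)) (rectpath a1 a3)"
    "((\<lambda>z. ?e z / (z - of_real b') ^ Suc 0) has_contour_integral 2 * pi * \<i> * cis (\<nu> * b')) (rectpath a1 a3)"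
    using has_contour_integral_rectpath_pole[OF _ assms(4), of ?e 1]
      has_contour_integral_rectpath_pole[OF _ assms(4), of ?e 0]
      has_contour_integral_rectpath_pole[OF _ assms(5), of ?e 0]
      has_contour_integral_rectpath_pole[OF _ assms(6), of ?e 0]
    by (simp_all add: cis_conv_exp mult_ac)
  then have "(?pf has_contour_integral c2 * (2 * pi * \<i> * (\<i> * of_real \<nu>)) + c1 * (2 * pi * \<i>)
      + c * (2 * pi * \<i> * cis (\<nu> * b)) + c' * (2 * pi * \<i> * cis (\<nu> * b'))) (rectpath a1 a3)"
    by (intro has_contour_integral_add has_contour_integral_lmul)
  moreover have "c2 * (2 * pi * \<i> * (\<i> * of_real \<nu>)) + c1 * (2 * pi * \<i>)
      + c * (2 * pi * \<i> * cis (\<nu> * b)) + c' * (2 * pi * \<i> * cis (\<nu> * b')) = 2 * pi * \<i> * kernel_residue_sum b b' \<nu>"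
    unfolding kernel_residue_sum_def c2_def c1_def c_def c'_def by (simp add: field_simps)
  moreover have "?pf z = exp_kernel b b' \<nu> z" if "z \<in> path_image (rectpath a1 a3)" for z
  proof -
    have "z \<noteq> 0" "z \<noteq> of_real b" "z \<noteq> of_real b'"
      using that assms(4-6) by (auto simp: path_image_rectpath_cbox_minus_box in_box_complex_iff)
    then show ?thesis
      unfolding exp_kernel_def c2_def c1_def c_def c'_def using pole_kernel_partial_fractions[OF assms(1-3)]
      by (simp add: field_simps power2_eq_square)
  qed
  ultimately show ?thesis
    by (auto intro: has_contour_integral_eq)
qed

lemma exp_kernel_far:
  assumes "2 * \<bar>b\<bar> + 2 * \<bar>b'\<bar> + 2 \<le> T" "T \<le> \<bar>Re z\<bar> \<or> T \<le> \<bar>Im z\<bar>" "- \<nu> * Im z \<le> c"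
  shows "z \<in> UNIV - {0, of_real b, of_real b'} \<and> norm (exp_kernel b b' \<nu> z) \<le> exp c * (4 / T ^ 4)"
proof -
  have "T \<le> norm z"
    using assms(2) abs_Re_le_cmod[of z] abs_Im_le_cmod[of z] by linarith
  then show ?thesis
    using assms norm_exp_kernel_le[of T b b' z \<nu> c] by (auto simp: norm_of_real)
qed

lemma exp_kernel_far_upper:
  assumes "2 * \<bar>b\<bar> + 2 * \<bar>b'\<bar> + 2 \<le> T" "T \<le> \<bar>Re z\<bar> \<or> T \<le> \<bar>Im z\<bar>" "- 1 \<le> Im z" "0 \<le> \<nu>"
  shows "z \<in> UNIV - {0, of_real b, of_real b'} \<and> norm (exp_kernel b b' \<nu> z) \<le> exp \<nu> * (4 / T ^ 4)"
  using mult_left_mono[OF assms(3,4)] by (intro exp_kernel_far[OF assms(1,2)]) simp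

lemma exp_kernel_far_lower:
  assumes "2 * \<bar>b\<bar> + 2 * \<bar>b'\<bar> + 2 \<le> T" "T \<le> \<bar>Re z\<bar> \<or> T \<le> \<bar>Im z\<bar>" "Im z \<le> 0" "\<nu> \<le> 0"
  shows "z \<in> UNIV - {0, of_real b, of_real b'} \<and> norm (exp_kernel b b' \<nu> z) \<le> 4 / T ^ 4"
  using mult_nonpos_nonpos[OF assms(4,3)] exp_kernel_far[OF assms(1,2), of \<nu> 0] by simp

definition lower_segment :: "real \<Rightarrow> real \<Rightarrow> complex" where
  "lower_segment T = linepath (Complex (- T) (- 1)) (Complex T (- 1))"

lemma norm_lower_segment_exp_kernel_diff_le:
  assumes "b \<noteq> 0" "b' \<noteq> 0" "b \<noteq> b'" "\<nu> \<ge> 0" and T: "2 * \<bar>b\<bar> + 2 * \<bar>b'\<bar> + 2 \<le> T"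
  shows "norm (contour_integral (lower_segment T) (exp_kernel b b' \<nu>) - 2 * pi * \<i> * kernel_residue_sum b b' \<nu>)
           \<le> exp \<nu> * (4 / T ^ 4) * (4 * T + 2)"
proof -
  let ?g = "exp_kernel b b' \<nu>" and ?B = "exp \<nu> * (4 / T ^ 4)"
  have inside: "0 \<in> box (Complex (- T) (- 1)) (Complex T T)"
    "of_real b \<in> box (Complex (- T) (- 1)) (Complex T T)" "of_real b' \<in> box (Complex (- T) (- 1)) (Complex T T)"
    using T by (auto simp: in_box_complex_iff)
  then have "path_image (rectpath (Complex (- T) (- 1)) (Complex T T)) \<subseteq> UNIV - {0, of_real b, of_real b'}"
    using T by (auto simp: path_image_rectpath_cbox_minus_box)
  then have "2 * pi * \<i> * kernel_residue_sum b b' \<nu> = contour_integral (lower_segment T) ?g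
      + contour_integral (linepath (Complex T (- 1)) (Complex T T)) ?g
      - contour_integral (linepath (Complex (- T) T) (Complex T T)) ?g
      - contour_integral (linepath (Complex (- T) (- 1)) (Complex (- T) T)) ?g"
    unfolding lower_segment_def
      has_contour_integral_rectpath_exp_kernel[OF assms(1-3) inside, THEN contour_integral_unique, symmetric]
    by (intro contour_integral_rectpath_sides continuous_on_subset[OF exp_kernel_continuous_on])
  then have decomp: "contour_integral (lower_segment T) ?g - 2 * pi * \<i> * kernel_residue_sum b b' \<nu>
      = contour_integral (linepath (Complex (- T) T) (Complex T T)) ?g
      + contour_integral (linepath (Complex (- T) (- 1)) (Complex (- T) T)) ?g
      - contour_integral (linepath (Complex T (- 1)) (Complex T T)) ?g"
    by (simp add: algebra_simps)
  have "0 \<le> T"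
    using T by (smt (verit) abs_ge_zero)
  have vertical: "norm (contour_integral (linepath (Complex x (- 1)) (Complex x T)) ?g) \<le> ?B * (T - - 1)"
    if "x = T \<or> x = - T" for x
  proof (rule norm_contour_integral_vertical_le[OF _ exp_kernel_continuous_on])
    fix y assume "- 1 \<le> y" "y \<le> T"
    then show "Complex x y \<in> UNIV - {0, of_real b, of_real b'} \<and> norm (?g (Complex x y)) \<le> ?B"
      using that \<open>0 \<le> T\<close> assms(4) by (intro exp_kernel_far_upper[OF T]) auto
  qed (use \<open>0 \<le> T\<close> in simp)
  have top: "norm (contour_integral (linepath (Complex (- T) T) (Complex T T)) ?g) \<le> ?B * (T - - T)"
  proof (rule norm_contour_integral_horizontal_le[OF _ exp_kernel_continuous_on])
    fix x
    show "Complex x T \<in> UNIV - {0, of_real b, of_real b'} \<and> norm (?g (Complex x T)) \<le> ?B"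
      using \<open>0 \<le> T\<close> assms(4) by (intro exp_kernel_far_upper[OF T]) auto
  qed (use \<open>0 \<le> T\<close> in simp)
  have "norm (contour_integral (lower_segment T) ?g - 2 * pi * \<i> * kernel_residue_sum b b' \<nu>)
      \<le> ?B * (T - - T) + ?B * (T - - 1) + ?B * (T - - 1)"
    unfolding decomp
    by (rule norm_triangle_le_diff[OF add_mono[OF norm_triangle_mono[OF top vertical[of "- T"]] vertical[of T]]]) simp_all
  also have "\<dots> = ?B * (4 * T + 2)"
    by (simp add: ring_distribs)
  finally show ?thesis .
qed

lemma lower_segment_exp_kernel_nonneg:
  assumes "b \<noteq> 0" "b' \<noteq> 0" "b \<noteq> b'" "\<nu> \<ge> 0"
  shows "(\<lambda>n. contour_integral (lower_segment (real n)) (exp_kernel b b' \<nu>))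
           \<longlonglongrightarrow> 2 * pi * \<i> * kernel_residue_sum b b' \<nu>"
proof -
  have "(\<lambda>n. exp \<nu> * (4 / real n ^ 4) * (4 * real n + 2)) \<longlonglongrightarrow> 0"
    by real_asymp
  from LIM_zero_cancel[OF tendsto_zero_by_eventual_bound[OF norm_lower_segment_exp_kernel_diff_le[OF assms] this]]
  show ?thesis .
qed

lemma exp_kernel_holomorphic_lower: "exp_kernel b b' \<nu> holomorphic_on {z. Im z < 0}"
proof -
  have "z \<noteq> 0 \<and> z \<noteq> of_real b \<and> z \<noteq> of_real b'" if "Im z < 0" for z
    using that by auto
  then show ?thesis
    unfolding exp_kernel_def pole_kernel_def by (intro holomorphic_intros) auto
qed

lemma norm_lower_segment_exp_kernel_le:
  assumes "\<nu> \<le> 0" and T: "2 * \<bar>b\<bar> + 2 * \<bar>b'\<bar> + 2 \<le> T"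
  shows "norm (contour_integral (lower_segment T) (exp_kernel b b' \<nu>)) \<le> 4 / T ^ 4 * (4 * T - 2)"
proof -
  let ?g = "exp_kernel b b' \<nu>" and ?B = "4 / T ^ 4"
  have "path_image (rectpath (Complex (- T) (- T)) (Complex T (- 1))) \<subseteq> {z. Im z < 0}"
    using T path_image_rectpath_subset_cbox[of "Complex (- T) (- T)" "Complex T (- 1)"]
    by (fastforce simp: in_cbox_complex_iff)
  moreover from this have "path_image (rectpath (Complex (- T) (- T)) (Complex T (- 1))) \<subseteq> UNIV - {0, of_real b, of_real b'}"
    by auto
  ultimately have "contour_integral (rectpath (Complex (- T) (- T)) (Complex T (- 1))) ?g = 0"
    and "contour_integral (rectpath (Complex (- T) (- T)) (Complex T (- 1))) ?g
      = contour_integral (linepath (Complex (- T) (- T)) (Complex T (- T))) ?g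
      + contour_integral (linepath (Complex T (- T)) (Complex T (- 1))) ?g
      - contour_integral (lower_segment T) ?g
      - contour_integral (linepath (Complex (- T) (- T)) (Complex (- T) (- 1))) ?g"
    unfolding lower_segment_def
    by (auto intro!: Cauchy_theorem_convex_simple[OF exp_kernel_holomorphic_lower convex_halfspace_Im_lt,
        THEN contour_integral_unique] contour_integral_rectpath_sides continuous_on_subset[OF exp_kernel_continuous_on])
  then have decomp: "contour_integral (lower_segment T) ?g
      = contour_integral (linepath (Complex (- T) (- T)) (Complex T (- T))) ?g
      + contour_integral (linepath (Complex T (- T)) (Complex T (- 1))) ?g
      - contour_integral (linepath (Complex (- T) (- T)) (Complex (- T) (- 1))) ?g"
    by (simp add: algebra_simps)
  have "0 \<le> T"
    using T by (smt (verit) abs_ge_zero)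
  have vertical: "norm (contour_integral (linepath (Complex x (- T)) (Complex x (- 1))) ?g) \<le> ?B * (- 1 - - T)"
    if "x = T \<or> x = - T" for x
  proof (rule norm_contour_integral_vertical_le[OF _ exp_kernel_continuous_on])
    fix y assume "- T \<le> y" "y \<le> - 1"
    then show "Complex x y \<in> UNIV - {0, of_real b, of_real b'} \<and> norm (?g (Complex x y)) \<le> ?B"
      using that \<open>0 \<le> T\<close> assms(1) by (intro exp_kernel_far_lower[OF T]) auto
  qed (use T in simp)
  have bottom: "norm (contour_integral (linepath (Complex (- T) (- T)) (Complex T (- T))) ?g) \<le> ?B * (T - - T)"
  proof (rule norm_contour_integral_horizontal_le[OF _ exp_kernel_continuous_on])
    fix x
    show "Complex x (- T) \<in> UNIV - {0, of_real b, of_real b'} \<and> norm (?g (Complex x (- T))) \<le> ?B"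
      using \<open>0 \<le> T\<close> assms(1) by (intro exp_kernel_far_lower[OF T]) auto
  qed (use \<open>0 \<le> T\<close> in simp)
  have "norm (contour_integral (lower_segment T) ?g) \<le> ?B * (T - - T) + ?B * (- 1 - - T) + ?B * (- 1 - - T)"
    unfolding decomp
    by (rule norm_triangle_le_diff[OF add_mono[OF norm_triangle_mono[OF bottom vertical[of T]] vertical[of "- T"]]]) simp_all
  also have "\<dots> = ?B * (4 * T - 2)"
    by (simp add: ring_distribs)
  finally show ?thesis .
qed

lemma lower_segment_exp_kernel_nonpos:
  assumes "\<nu> \<le> 0"
  shows "(\<lambda>n. contour_integral (lower_segment (real n)) (exp_kernel b b' \<nu>)) \<longlonglongrightarrow> 0"
proof -
  have "(\<lambda>n. 4 / real n ^ 4 * (4 * real n - 2)) \<longlonglongrightarrow> 0"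
    by real_asymp
  from tendsto_zero_by_eventual_bound[OF norm_lower_segment_exp_kernel_le[OF assms] this]
  show ?thesis .
qed

definition lower_line_integral :: "real \<Rightarrow> real \<Rightarrow> real \<Rightarrow> complex" where
  "lower_line_integral b b' \<nu> = (if 0 \<le> \<nu> then 2 * pi * \<i> * kernel_residue_sum b b' \<nu> else 0)"

(* With an explicit weight 1 or 0, as consumed by Spm_eq_residue_combination. *)
lemma lower_line_integral_nonneg: "0 \<le> \<nu> \<Longrightarrow> lower_line_integral b b' \<nu> = 2 * pi * \<i> * kernel_residue_sum b b' \<nu> * 1"
  by (simp add: lower_line_integral_def)

lemma lower_line_integral_nonpos:
  assumes "b \<noteq> 0" "b' \<noteq> 0" "b \<noteq> b'" "\<nu> \<le> 0"
  shows "lower_line_integral b b' \<nu> = 2 * pi * \<i> * kernel_residue_sum b b' \<nu> * 0"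
  using assms kernel_residue_sum_0[OF assms(1-3)] by (cases "\<nu> = 0") (auto simp: lower_line_integral_def)

lemma lower_segment_exp_kernel_tendsto:
  assumes "b \<noteq> 0" "b' \<noteq> 0" "b \<noteq> b'"
  shows "(\<lambda>n. contour_integral (lower_segment (real n)) (exp_kernel b b' \<nu>)) \<longlonglongrightarrow> lower_line_integral b b' \<nu>"
  using lower_segment_exp_kernel_nonneg[OF assms, of \<nu>] lower_segment_exp_kernel_nonpos[of \<nu> b b']
  unfolding lower_line_integral_def by auto

section \<open>The entire integrand\<close>

definition csinc :: "real \<Rightarrow> real \<Rightarrow> complex \<Rightarrow> complex" where
  "csinc c a z = (if z = of_real a then of_real c else sin (of_real c * (z - of_real a)) / (z - of_real a))"

lemma csinc_holomorphic: "csinc c a holomorphic_on UNIV"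
proof (rule no_isolated_singularity'[where K = "{of_real a}"])
  have "((\<lambda>z::complex. sin (of_real c * (z - of_real a))) has_field_derivative of_real c) (at (of_real a))"
    by (auto intro!: derivative_eq_intros)
  then have "((\<lambda>z::complex. sin (of_real c * (z - of_real a)) / (z - of_real a)) \<longlongrightarrow> of_real c) (at (of_real a))"
    unfolding has_field_derivative_iff by simp
  then have "(csinc c a \<longlongrightarrow> of_real c) (at (of_real a))"
    by (rule Lim_transform_eventually) (auto simp: eventually_at_filter csinc_def)
  then show "(csinc c a \<longlongrightarrow> csinc c a z) (at z within UNIV)" if "z \<in> {of_real a}" for z
    using that by (simp add: csinc_def)
  have "(\<lambda>z. sin (of_real c * (z - of_real a)) / (z - of_real a)) holomorphic_on UNIV - {of_real a}"
    by (auto intro!: holomorphic_intros)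
  then show "csinc c a holomorphic_on UNIV - {of_real a}"
    by (rule holomorphic_transform) (auto simp: csinc_def)
qed auto

lemma csinc_of_real: "x \<noteq> a \<Longrightarrow> csinc c a (of_real x) = of_real (sin (c * (x - a)) / (x - a))"
  by (simp add: csinc_def flip: sin_of_real)

definition integrand_ext :: "real \<Rightarrow> real \<Rightarrow> real \<Rightarrow> real \<Rightarrow> real \<Rightarrow> complex \<Rightarrow> complex" where
  "integrand_ext b0 lam K b b' z = exp (- \<i> * of_real lam * z) * csinc b0 0 z ^ 2 * csinc K b z * csinc K b' z"

lemma integrand_ext_holomorphic: "integrand_ext b0 lam K b b' holomorphic_on UNIV"
  unfolding integrand_ext_def using csinc_holomorphic
  by (intro holomorphic_intros) (auto intro: holomorphic_on_subset)

lemma integrand_ext_continuous_on: "continuous_on S (integrand_ext b0 lam K b b')"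
  using integrand_ext_holomorphic holomorphic_on_imp_continuous_on holomorphic_on_subset by blast

lemma integrand_ext_eq:
  assumes "z \<noteq> 0" "z \<noteq> of_real b" "z \<noteq> of_real b'"
  shows "integrand_ext b0 lam K b b' z = exp (- \<i> * of_real lam * z) * sin (of_real b0 * z) ^ 2
      * sin (of_real K * (z - of_real b)) * sin (of_real K * (z - of_real b')) * pole_kernel b b' z"
  using assms unfolding integrand_ext_def csinc_def pole_kernel_def by (simp add: field_simps power2_eq_square)

lemma norm_integrand_ext_le:
  assumes "b0 \<ge> 0" "K \<ge> 0" "lam \<ge> 0"
    and T: "2 * \<bar>b\<bar> + 2 * \<bar>b'\<bar> + 2 \<le> T" and z: "T \<le> norm z" "- 1 \<le> Im z" "Im z \<le> 0"
  shows "norm (integrand_ext b0 lam K b b' z) \<le> exp (2 * b0 + 2 * K) * (4 / T ^ 4)"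
proof -
  have "z \<noteq> 0" "z \<noteq> of_real b" "z \<noteq> of_real b'"
    using T z by (auto simp: norm_of_real)
  have sin_le: "norm (sin (of_real c * w)) \<le> exp c" if "c \<ge> 0" "\<bar>Im w\<bar> \<le> 1" for c w
  proof -
    have "norm (sin (of_real c * w)) \<le> exp \<bar>c * Im w\<bar>"
      using cmod_sin_le_exp[of 1 "of_real c * w"] by simp
    also have "\<dots> \<le> exp c"
      using that by (simp add: abs_mult mult_left_le)
    finally show ?thesis .
  qed
  have "norm (exp (- \<i> * of_real lam * z)) \<le> 1"
    using assms(3) z by (simp add: mult_nonneg_nonpos)
  moreover have "norm (sin (of_real b0 * z)) \<le> exp b0"
    using z assms(1) by (intro sin_le) auto
  moreover have "norm (sin (of_real K * (z - of_real c))) \<le> exp K" for c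
    using z assms(2) by (intro sin_le) auto
  ultimately have "norm (integrand_ext b0 lam K b b' z) \<le> 1 * (exp b0)\<^sup>2 * exp K * exp K * (4 / T ^ 4)"
    unfolding integrand_ext_eq[OF \<open>z \<noteq> 0\<close> \<open>z \<noteq> of_real b\<close> \<open>z \<noteq> of_real b'\<close>] norm_mult norm_power
    using norm_pole_kernel_le[of T b b' z] T z
    by (intro mult_mono power_mono) auto
  also have "\<dots> = exp (2 * b0 + 2 * K) * (4 / T ^ 4)"
    by (simp add: power2_eq_square flip: exp_add)
  finally show ?thesis .
qed

definition real_segment :: "real \<Rightarrow> real \<Rightarrow> complex" where
  "real_segment T = linepath (Complex (- T) 0) (Complex T 0)"

lemma integrand_ext_shift:
  assumes "b0 \<ge> 0" "K \<ge> 0" "lam \<ge> 0"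
  shows "(\<lambda>n. contour_integral (real_segment (real n)) (integrand_ext b0 lam K b b')
            - contour_integral (lower_segment (real n)) (integrand_ext b0 lam K b b')) \<longlonglongrightarrow> 0"
proof -
  let ?F = "integrand_ext b0 lam K b b'"
  have bound: "norm (contour_integral (real_segment T) ?F - contour_integral (lower_segment T) ?F)
          \<le> exp (2 * b0 + 2 * K) * (4 / T ^ 4) * 2"
    if T: "2 * \<bar>b\<bar> + 2 * \<bar>b'\<bar> + 2 \<le> T" for T
  proof -
    let ?B = "exp (2 * b0 + 2 * K) * (4 / T ^ 4)"
    have decomp: "contour_integral (real_segment T) ?F - contour_integral (lower_segment T) ?F
        = contour_integral (linepath (Complex T (- 1)) (Complex T 0)) ?F
        - contour_integral (linepath (Complex (- T) (- 1)) (Complex (- T) 0)) ?F"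
      using Cauchy_theorem_convex_simple[OF integrand_ext_holomorphic convex_UNIV,
          of "rectpath (Complex (- T) (- 1)) (Complex T 0)", THEN contour_integral_unique]
        contour_integral_rectpath_sides[of "- T" "- 1" T 0, OF integrand_ext_continuous_on]
      unfolding lower_segment_def real_segment_def by (simp add: algebra_simps)
    have vert: "norm (contour_integral (linepath (Complex x (- 1)) (Complex x 0)) ?F) \<le> ?B * (0 - - 1)"
      if "x = T \<or> x = - T" for x
    proof (rule norm_contour_integral_vertical_le[OF _ integrand_ext_continuous_on[of UNIV]])
      fix y :: real assume "- 1 \<le> y" "y \<le> 0"
      moreover have "T \<le> norm (Complex x y)"
        using that T abs_Re_le_cmod[of "Complex x y"] by auto
      ultimately show "Complex x y \<in> UNIV \<and> norm (?F (Complex x y)) \<le> ?B"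
        using norm_integrand_ext_le[OF assms T] by simp
    qed simp
    show ?thesis
      unfolding decomp using norm_triangle_le_diff[OF add_mono[OF vert[of T] vert[of "- T"]]] by simp
  qed
  have "(\<lambda>n. exp (2 * b0 + 2 * K) * (4 / real n ^ 4) * 2) \<longlonglongrightarrow> 0"
    by real_asymp
  from tendsto_zero_by_eventual_bound[OF bound this] show ?thesis .
qed

definition sin_sq_coeff :: "int \<Rightarrow> complex" where
  "sin_sq_coeff j = (if j = 0 then 1 / 2 else - 1 / 4)"

definition sin_prod_coeff :: "real \<Rightarrow> real \<Rightarrow> real \<Rightarrow> int \<Rightarrow> complex" where
  "sin_prod_coeff K b b' k =
     (if k = 0 then of_real (cos (K * (b - b'))) / 2 else - cis (- of_int k * K * (b + b')) / 4)"

lemma sin_sq_expansion: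
  "sin (of_real c * z) ^ 2 = (\<Sum>j\<in>{-1, 0, 1}. sin_sq_coeff j * exp (\<i> * of_real (2 * of_int j * c) * z))"
proof -
  define X where "X = exp (\<i> * of_real c * z)"
  have "X \<noteq> 0"
    by (simp add: X_def)
  have sin: "sin (of_real c * z) = (X - 1 / X) / (2 * \<i>)"
    unfolding sin_exp_eq X_def by (simp add: exp_minus mult.assoc inverse_eq_divide)
  have exps: "exp (\<i> * of_real (2 * of_int (- 1) * c) * z) = 1 / X ^ 2"
    "exp (\<i> * of_real (2 * of_int 0 * c) * z) = 1" "exp (\<i> * of_real (2 * of_int 1 * c) * z) = X ^ 2"
    unfolding X_def by (simp_all add: exp_minus inverse_eq_divide algebra_simps flip: exp_of_nat_mult)
  have "((X - 1 / X) / (2 * \<i>)) ^ 2 = - 1 / 4 * (1 / X ^ 2) + 1 / 2 * 1 + - 1 / 4 * X ^ 2"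
    using \<open>X \<noteq> 0\<close> by (simp add: field_simps power2_eq_square)
  then show ?thesis
    unfolding sum_neg1_0_1 sin exps by (simp add: sin_sq_coeff_def)
qed

lemma sin_prod_expansion:
  "sin (of_real K * (z - of_real b)) * sin (of_real K * (z - of_real b'))
     = (\<Sum>k\<in>{-1, 0, 1}. sin_prod_coeff K b b' k * exp (\<i> * of_real (2 * of_int k * K) * z))"
proof -
  define Y U V where "Y = exp (\<i> * of_real K * z)" and "U = cis (K * b)" and "V = cis (K * b')"
  have nz: "Y \<noteq> 0" "U \<noteq> 0" "V \<noteq> 0"
    by (simp_all add: Y_def U_def V_def)
  have sin: "sin (of_real K * (z - of_real c)) = (Y / cis (K * c) - cis (K * c) / Y) / (2 * \<i>)" for c
  proof -
    have "exp (\<i> * (of_real K * (z - of_real c))) = exp (\<i> * of_real K * z - \<i> * of_real (K * c))"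
      "exp (- (\<i> * (of_real K * (z - of_real c)))) = exp (\<i> * of_real (K * c) - \<i> * of_real K * z)"
      by (simp_all add: algebra_simps)
    then show ?thesis
      unfolding sin_exp_eq exp_diff cis_conv_exp Y_def by simp
  qed
  have exps: "exp (\<i> * of_real (2 * of_int (- 1) * K) * z) = 1 / Y ^ 2"
    "exp (\<i> * of_real (2 * of_int 0 * K) * z) = 1" "exp (\<i> * of_real (2 * of_int 1 * K) * z) = Y ^ 2"
    unfolding Y_def by (simp_all add: exp_minus inverse_eq_divide algebra_simps flip: exp_of_nat_mult)
  have "U * V * cis (- (K * (b + b'))) = 1"
    by (simp add: U_def V_def cis_mult algebra_simps)
  then have coeffs: "sin_prod_coeff K b b' (- 1) = - (U * V) / 4" "sin_prod_coeff K b b' 1 = - 1 / (4 * U * V)"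
    "sin_prod_coeff K b b' 0 = (U / V + V / U) / 4"
    unfolding sin_prod_coeff_def U_def V_def
    by (simp_all add: cis_mult of_real_cos_eq_cis cis_divide right_diff_distrib field_simps)
  have "(Y / U - U / Y) / (2 * \<i>) * ((Y / V - V / Y) / (2 * \<i>))
      = - (U * V) / 4 * (1 / Y ^ 2) + (U / V + V / U) / 4 * 1 + - 1 / (4 * U * V) * Y ^ 2"
    using nz by (simp add: field_simps power2_eq_square)
  then show ?thesis
    unfolding sum_neg1_0_1 sin exps coeffs by (simp add: U_def V_def)
qed

lemma integrand_ext_expansion:
  assumes "z \<noteq> 0" "z \<noteq> of_real b" "z \<noteq> of_real b'"
  shows "integrand_ext b0 lam K b b' z = (\<Sum>j\<in>{-1, 0, 1}. \<Sum>k\<in>{-1, 0, 1}.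
           sin_sq_coeff j * sin_prod_coeff K b b' k * exp_kernel b b' (2 * of_int j * b0 + 2 * of_int k * K - lam) z)"
proof -
  let ?E = "exp (- \<i> * of_real lam * z)"
  have "integrand_ext b0 lam K b b' z
      = ?E * sin (of_real b0 * z) ^ 2 * (sin (of_real K * (z - of_real b)) * sin (of_real K * (z - of_real b')))
        * pole_kernel b b' z"
    by (simp add: integrand_ext_eq[OF assms] mult.assoc)
  also have "\<dots> = (\<Sum>j\<in>{-1, 0, 1}. \<Sum>k\<in>{-1, 0, 1}. sin_sq_coeff j * sin_prod_coeff K b b' k *
      (?E * exp (\<i> * of_real (2 * of_int j * b0) * z) * exp (\<i> * of_real (2 * of_int k * K) * z) * pole_kernel b b' z))"
    unfolding sin_sq_expansion sin_prod_expansion sum_distrib_left sum_distrib_right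
    by (subst sum.swap) (simp only: mult_ac)
  also have "\<dots> = (\<Sum>j\<in>{-1, 0, 1}. \<Sum>k\<in>{-1, 0, 1}.
           sin_sq_coeff j * sin_prod_coeff K b b' k * exp_kernel b b' (2 * of_int j * b0 + 2 * of_int k * K - lam) z)"
  proof -
    have "exp (\<i> * of_real (2 * of_int j * b0 + 2 * of_int k * K - lam) * z)
        = ?E * exp (\<i> * of_real (2 * of_int j * b0) * z) * exp (\<i> * of_real (2 * of_int k * K) * z)" for j k :: int
      by (simp add: algebra_simps flip: exp_add)
    then show ?thesis
      unfolding exp_kernel_def by simp
  qed
  finally show ?thesis .
qed

lemma lower_segment_avoids_poles:
  "closed_segment (Complex (- T) (- 1)) (Complex T (- 1)) \<subseteq> UNIV - {0, of_real b, of_real b'}"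
  by (auto simp: closed_segment_same_Im)

lemma lower_segment_integrand_ext_tendsto:
  assumes "b \<noteq> 0" "b' \<noteq> 0" "b \<noteq> b'"
  shows "(\<lambda>n. contour_integral (lower_segment (real n)) (integrand_ext b0 lam K b b')) \<longlonglongrightarrow>
           (\<Sum>j\<in>{-1, 0, 1}. \<Sum>k\<in>{-1, 0, 1}.
              sin_sq_coeff j * sin_prod_coeff K b b' k * lower_line_integral b b' (2 * of_int j * b0 + 2 * of_int k * K - lam))"
proof -
  have integrable: "exp_kernel b b' \<nu> contour_integrable_on lower_segment T" for \<nu> T
    unfolding lower_segment_def
    by (rule contour_integrable_continuous_linepath[OF continuous_on_subset[OF exp_kernel_continuous_on lower_segment_avoids_poles]])
  have "contour_integral (lower_segment T) (integrand_ext b0 lam K b b') = (\<Sum>j\<in>{-1, 0, 1}. \<Sum>k\<in>{-1, 0, 1}.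
      sin_sq_coeff j * sin_prod_coeff K b b' k * contour_integral (lower_segment T) (exp_kernel b b' (2 * of_int j * b0 + 2 * of_int k * K - lam)))"
    for T
  proof -
    have "contour_integral (lower_segment T) (integrand_ext b0 lam K b b') = contour_integral (lower_segment T) (\<lambda>z.
        \<Sum>j\<in>{-1, 0, 1}. \<Sum>k\<in>{-1, 0, 1}. sin_sq_coeff j * sin_prod_coeff K b b' k * exp_kernel b b' (2 * of_int j * b0 + 2 * of_int k * K - lam) z)"
      using lower_segment_avoids_poles
      by (intro contour_integral_eq integrand_ext_expansion) (auto simp: lower_segment_def)
    also have "\<dots> = (\<Sum>j\<in>{-1, 0, 1}. \<Sum>k\<in>{-1, 0, 1}. sin_sq_coeff j * sin_prod_coeff K b b' k
        * contour_integral (lower_segment T) (exp_kernel b b' (2 * of_int j * b0 + 2 * of_int k * K - lam)))"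
      by (intro contour_integral_unique has_contour_integral_sum has_contour_integral_lmul
          has_contour_integral_integral integrable) simp_all
    finally show ?thesis .
  qed
  then show ?thesis
    by (simp only:) (intro tendsto_sum tendsto_mult_left lower_segment_exp_kernel_tendsto[OF assms])
qed

section \<open>The real integral\<close>

lemma abs_sin_mult_div_le:
  fixes K y :: real
  shows "\<bar>sin (K * y) / y\<bar> \<le> \<bar>K\<bar>"
proof (cases "y = 0")
  case False
  have "\<bar>sin (K * y)\<bar> \<le> \<bar>K\<bar> * \<bar>y\<bar>"
    using abs_sin_x_le_abs_x[of "K * y"] by (simp add: abs_mult)
  with False show ?thesis
    by (simp add: abs_divide divide_le_eq)
qed simp

lemma sin_sq_div_sq_le:
  fixes b0 x :: real
  assumes "b0 > 0"
  shows "(sin (b0 * x))\<^sup>2 / x\<^sup>2 \<le> 2 * (b0\<^sup>2 + 1) / (1 + x\<^sup>2)"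
proof (cases "x\<^sup>2 \<le> 1")
  case True
  have "(sin (b0 * x))\<^sup>2 / x\<^sup>2 = \<bar>sin (b0 * x) / x\<bar>\<^sup>2"
    by (simp add: power_divide)
  also have "\<dots> \<le> b0\<^sup>2"
    using abs_sin_mult_div_le[of b0 x] assms by (intro power_mono) auto
  also have "\<dots> \<le> 2 * (b0\<^sup>2 + 1) / (1 + x\<^sup>2)"
  proof -
    have "b0\<^sup>2 * (1 + x\<^sup>2) \<le> (b0\<^sup>2 + 1) * 2"
      using True mult_left_mono[of "1 + x\<^sup>2" 2 "b0\<^sup>2"] by simp
    then show ?thesis
      by (simp add: le_divide_eq add_pos_nonneg)
  qed
  finally show ?thesis .
next
  case False
  have "(sin (b0 * x))\<^sup>2 / x\<^sup>2 \<le> 1 / x\<^sup>2"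
    using False by (intro divide_right_mono) (auto simp: abs_square_le_1)
  also have "\<dots> \<le> 2 / (1 + x\<^sup>2)"
    using False by (simp add: divide_simps add_pos_nonneg)
  also have "\<dots> \<le> 2 * (b0\<^sup>2 + 1) / (1 + x\<^sup>2)"
    by (intro divide_right_mono) (auto simp: add_pos_nonneg)
  finally show ?thesis .
qed

lemma norm_Spm_integrand_le:
  assumes "b0 > 0"
  shows "norm (Spm_integrand al g0 k0 b0 lam dt b b' x)
           \<le> (Kc al g0 k0 lam dt)\<^sup>2 * (2 * (b0\<^sup>2 + 1)) / (1 + x\<^sup>2)"
proof -
  define K where "K = Kc al g0 k0 lam dt"
  have "norm (Spm_integrand al g0 k0 b0 lam dt b b' x)
      = (sin (b0 * x))\<^sup>2 / x\<^sup>2 * \<bar>sin (K * (b - x)) / (b - x)\<bar> * \<bar>sin (K * (x - b')) / (x - b')\<bar>"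
    unfolding Spm_integrand_def Let_def K_def norm_mult norm_of_real by (simp add: abs_mult)
  also have "\<dots> \<le> (2 * (b0\<^sup>2 + 1) / (1 + x\<^sup>2)) * \<bar>K\<bar> * \<bar>K\<bar>"
    using assms by (intro mult_mono sin_sq_div_sq_le abs_sin_mult_div_le) auto
  also have "\<dots> = K\<^sup>2 * (2 * (b0\<^sup>2 + 1)) / (1 + x\<^sup>2)"
    by (simp add: power2_eq_square abs_mult_self_eq)
  finally show ?thesis
    unfolding K_def .
qed

lemma Spm_integrand_measurable: "Spm_integrand al g0 k0 b0 lam dt b b' \<in> borel_measurable lborel"
  unfolding Spm_integrand_def Let_def by measurable

lemma Spm_integrand_integrable:
  assumes "b0 > 0"
  shows "integrable lborel (Spm_integrand al g0 k0 b0 lam dt b b')"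
proof (rule Bochner_Integration.integrable_bound[OF _ Spm_integrand_measurable])
  show "integrable lborel (\<lambda>x. (Kc al g0 k0 lam dt)\<^sup>2 * (2 * (b0\<^sup>2 + 1)) / (1 + x\<^sup>2))"
    using integrable_inverse_1_plus_square unfolding set_integrable_def
    by (simp add: integrable_mult_right divide_inverse)
  show "AE x in lborel. norm (Spm_integrand al g0 k0 b0 lam dt b b' x)
          \<le> norm ((Kc al g0 k0 lam dt)\<^sup>2 * (2 * (b0\<^sup>2 + 1)) / (1 + x\<^sup>2))"
    using norm_Spm_integrand_le[OF assms] by (auto intro: order_trans[OF _ abs_ge_self])
qed

lemma integral_Spm_integrand_truncations:
  assumes "b0 > 0"
  shows "(\<lambda>n. integral {- real n..real n} (Spm_integrand al g0 k0 b0 lam dt b b'))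
           \<longlonglongrightarrow> (LINT x|lborel. Spm_integrand al g0 k0 b0 lam dt b b' x)"
proof -
  let ?g = "Spm_integrand al g0 k0 b0 lam dt b b'"
  have int: "integrable lborel ?g"
    by (rule Spm_integrand_integrable[OF assms])
  have "(\<lambda>n. LINT x|lborel. indicator {- real n..real n} x *\<^sub>R ?g x) \<longlonglongrightarrow> (LINT x|lborel. ?g x)"
  proof (rule integral_dominated_convergence[where w = "\<lambda>x. norm (?g x)"])
    show "AE x in lborel. (\<lambda>n. indicator {- real n..real n} x *\<^sub>R ?g x) \<longlonglongrightarrow> ?g x"
    proof (rule AE_I2)
      fix x :: real
      have "eventually (\<lambda>n. \<bar>x\<bar> \<le> real n) sequentially"
        by (rule eventually_le_real_of_nat)
      then have "eventually (\<lambda>n. indicator {- real n..real n} x *\<^sub>R ?g x = ?g x) sequentially"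
        by eventually_elim (auto simp: indicator_def)
      then show "(\<lambda>n. indicator {- real n..real n} x *\<^sub>R ?g x) \<longlonglongrightarrow> ?g x"
        by (rule tendsto_eventually)
    qed
  qed (use int Spm_integrand_measurable in \<open>auto simp: indicator_def\<close>)
  moreover have "(LINT x|lborel. indicator {- real n..real n} x *\<^sub>R ?g x) = integral {- real n..real n} ?g" for n
  proof -
    have "set_integrable lborel {- real n..real n} ?g"
      unfolding set_integrable_def by (rule integrable_mult_indicator) (auto simp: int)
    from set_borel_integral_eq_integral(2)[OF this] show ?thesis
      unfolding set_lebesgue_integral_def .
  qed
  ultimately show ?thesis
    by simp
qed

lemma integrand_ext_of_real:
  assumes "x \<noteq> 0" "x \<noteq> b" "x \<noteq> b'"
  shows "integrand_ext b0 lam (Kc al g0 k0 lam dt) b b' (of_real x) = Spm_integrand al g0 k0 b0 lam dt b b' x"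
proof -
  define K where "K = Kc al g0 k0 lam dt"
  have "csinc b0 0 (of_real x) = of_real (sin (b0 * x) / x)"
    using csinc_of_real[of x 0 b0] assms by simp
  moreover have "csinc K b (of_real x) = of_real (sin (K * (b - x)) / (b - x))"
  proof -
    have "sin (K * (x - b)) / (x - b) = sin (K * (b - x)) / (b - x)"
      by (smt (verit) minus_divide_divide sin_minus mult_minus_right)
    then show ?thesis
      using csinc_of_real[of x b K] assms by simp
  qed
  moreover have "csinc K b' (of_real x) = of_real (sin (K * (x - b')) / (x - b'))"
    using csinc_of_real[of x b' K] assms by simp
  ultimately show ?thesis
    unfolding integrand_ext_def Spm_integrand_def Let_def K_def by (simp add: power_divide mult_ac)
qed

lemma integral_Spm_integrand_eq_real_segment:
  "integral {- real n..real n} (Spm_integrand al g0 k0 b0 lam dt b b')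
     = contour_integral (real_segment (real n)) (integrand_ext b0 lam (Kc al g0 k0 lam dt) b b')"
proof (cases "n = 0")
  case False
  have "Complex (- real n) 0 = of_real (- real n)" "Complex (real n) 0 = of_real (real n)"
    by (simp_all add: complex_eq_iff)
  then have "contour_integral (real_segment (real n)) (integrand_ext b0 lam (Kc al g0 k0 lam dt) b b')
      = integral {- real n..real n} (\<lambda>x. integrand_ext b0 lam (Kc al g0 k0 lam dt) b b' (of_real x))"
    unfolding real_segment_def using False by (subst contour_integral_linepath_Reals_eq) auto
  also have "\<dots> = integral {- real n..real n} (Spm_integrand al g0 k0 b0 lam dt b b')"
    by (rule integral_spike[of "{0, b, b'}"]) (auto simp: integrand_ext_of_real)
  finally show ?thesis
    by simp
qed (simp add: real_segment_def)

lemma LINT_Spm_integrand_eq_sum: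
  fixes al g0 k0 b0 lam dt b b' :: real
  defines "K \<equiv> Kc al g0 k0 lam dt"
  assumes "b0 > 0" "lam \<ge> 0" "K \<ge> 0" "b \<noteq> 0" "b' \<noteq> 0" "b \<noteq> b'"
  shows "(LINT x|lborel. Spm_integrand al g0 k0 b0 lam dt b b' x) = (\<Sum>j\<in>{-1, 0, 1}. \<Sum>k\<in>{-1, 0, 1}.
     sin_sq_coeff j * sin_prod_coeff K b b' k * lower_line_integral b b' (2 * of_int j * b0 + 2 * of_int k * K - lam))"
    (is "_ = ?V")
proof -
  let ?F = "integrand_ext b0 lam K b b'"
  have "(\<lambda>n. (contour_integral (real_segment (real n)) ?F - contour_integral (lower_segment (real n)) ?F)
      + contour_integral (lower_segment (real n)) ?F) \<longlonglongrightarrow> 0 + ?V"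
    using assms by (intro tendsto_add integrand_ext_shift lower_segment_integrand_ext_tendsto) auto
  then have "(\<lambda>n. integral {- real n..real n} (Spm_integrand al g0 k0 b0 lam dt b b')) \<longlonglongrightarrow> ?V"
    unfolding integral_Spm_integrand_eq_real_segment K_def by simp
  then show ?thesis
    using integral_Spm_integrand_truncations[OF assms(2)] LIMSEQ_unique by blast
qed

lemma sum_lower_line_integrals_eq:
  assumes "b0 > 0" "lam > 2 * b0" "K > 0"
  shows "(\<Sum>j\<in>{-1, 0, 1}. \<Sum>k\<in>{-1, 0, 1}.
     sin_sq_coeff j * sin_prod_coeff K b b' k * lower_line_integral b b' (2 * of_int j * b0 + 2 * of_int k * K - lam))
   = sin_prod_coeff K b b' 1 *
     (- 1 / 4 * lower_line_integral b b' (2 * K - lam + 2 * b0) + 1 / 2 * lower_line_integral b b' (2 * K - lam)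
      - 1 / 4 * lower_line_integral b b' (2 * K - lam - 2 * b0))"
proof -
  have vanish: "lower_line_integral b b' (2 * of_int j * b0 + 2 * of_int k * K - lam) = 0"
    if "j \<le> 1" "k \<le> 0" for j k :: int
  proof -
    have "of_int j * b0 \<le> 1 * b0" "of_int k * K \<le> 0"
      using that assms(1,3) by (intro mult_right_mono mult_nonpos_nonneg; simp)+
    then show ?thesis
      using assms(2) by (simp add: lower_line_integral_def)
  qed
  have "lower_line_integral b b' (2 * of_int (- 1) * b0 + 2 * of_int (- 1) * K - lam) = 0"
    "lower_line_integral b b' (2 * of_int (- 1) * b0 + 2 * of_int 0 * K - lam) = 0"
    "lower_line_integral b b' (2 * of_int 0 * b0 + 2 * of_int (- 1) * K - lam) = 0"
    "lower_line_integral b b' (2 * of_int 0 * b0 + 2 * of_int 0 * K - lam) = 0"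
    "lower_line_integral b b' (2 * of_int 1 * b0 + 2 * of_int (- 1) * K - lam) = 0"
    "lower_line_integral b b' (2 * of_int 1 * b0 + 2 * of_int 0 * K - lam) = 0"
    by (rule vanish; simp)+
  moreover have "2 * of_int (- 1) * b0 + 2 * of_int 1 * K - lam = 2 * K - lam - 2 * b0"
    "2 * of_int 0 * b0 + 2 * of_int 1 * K - lam = 2 * K - lam"
    "2 * of_int 1 * b0 + 2 * of_int 1 * K - lam = 2 * K - lam + 2 * b0"
    by simp_all
  ultimately show ?thesis
    unfolding sum_neg1_0_1 by (simp only:) (simp add: sin_sq_coeff_def algebra_simps)
qed

lemma Spm_eq_residue_combination:
  fixes al g0 k0 b0 lam dt b b' :: real and w1 w2 w3 :: complex
  defines "K \<equiv> Kc al g0 k0 lam dt" and "C \<equiv> Cc al g0 k0 lam dt"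
  assumes "b0 > 0" "lam > 2 * b0" "K > 0" "b \<noteq> 0" "b' \<noteq> 0" "b \<noteq> b'"
    and "lower_line_integral b b' (2 * K - lam + 2 * b0) = 2 * pi * \<i> * kernel_residue_sum b b' (2 * K - lam + 2 * b0) * w1"
    and "lower_line_integral b b' (2 * K - lam) = 2 * pi * \<i> * kernel_residue_sum b b' (2 * K - lam) * w2"
    and "lower_line_integral b b' (2 * K - lam - 2 * b0) = 2 * pi * \<i> * kernel_residue_sum b b' (2 * K - lam - 2 * b0) * w3"
  shows "Spm al g0 k0 b0 lam dt b b' = of_real (C\<^sup>2 / (8 * b0)) * (\<i> * cis (- (K * (b + b'))) *
     (w1 * kernel_residue_sum b b' (2 * K - lam + 2 * b0) + (- 2 * w2) * kernel_residue_sum b b' (2 * K - lam)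
      + w3 * kernel_residue_sum b b' (2 * K - lam - 2 * b0)))"
proof -
  have "sin_prod_coeff K b b' 1 = - cis (- (K * (b + b'))) / 4"
    by (simp add: sin_prod_coeff_def)
  moreover have "b0 \<noteq> 0"
    using assms(3) by simp
  moreover have "lam \<ge> 0" "Kc al g0 k0 lam dt \<ge> 0"
    using assms(3-5) unfolding K_def by auto
  ultimately show ?thesis
    unfolding Spm_def LINT_Spm_integrand_eq_sum[OF assms(3) \<open>lam \<ge> 0\<close> \<open>Kc al g0 k0 lam dt \<ge> 0\<close> assms(6-8)]
      sum_lower_line_integrals_eq[OF assms(3-5)]
      K_def[symmetric] C_def[symmetric] assms(9-11)
    by (simp only:) (simp add: field_simps)
qed

section \<open>Collecting the residues\<close>

lemma weighted_kernel_residue_sum: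
  fixes a1 a2 a3 :: complex
  assumes "b \<noteq> 0" "b' \<noteq> 0" "b \<noteq> b'"
  shows "\<i> * cis (- (K * (b + b'))) * (a1 * kernel_residue_sum b b' (2 * K - lam + 2 * b0)
        + a2 * kernel_residue_sum b b' (2 * K - lam) + a3 * kernel_residue_sum b b' (2 * K - lam - 2 * b0))
     = cis (- (K * (b + b'))) / of_real (b * b') * (\<i> * (a1 + a2 + a3) * of_real ((b + b') / (b * b'))
         - (a1 * of_real (2 * K - lam + 2 * b0) + a2 * of_real (2 * K - lam) + a3 * of_real (2 * K - lam - 2 * b0)))
     + \<i> * cis (K * (b - b')) * cis (- (lam * b)) * (a1 * cis (2 * b0 * b) + a2 + a3 * cis (- (2 * b0 * b)))
         / of_real (b\<^sup>2 * (b - b'))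
     - \<i> * cis (- (K * (b - b'))) * cis (- (lam * b')) * (a1 * cis (2 * b0 * b') + a2 + a3 * cis (- (2 * b0 * b')))
         / of_real (b'\<^sup>2 * (b - b'))"
proof -
  define E where "E = cis (- (K * (b + b')))"
  define P P' where "P = cis (K * (b - b')) * cis (- (lam * b))" and "P' = cis (- (K * (b - b'))) * cis (- (lam * b'))"
  define D D' where "D = complex_of_real (b\<^sup>2 * (b - b'))" and "D' = complex_of_real (b'\<^sup>2 * (b - b'))"
  define A where "A \<nu> = \<i> * of_real \<nu> / of_real (b * b') + of_real ((b + b') / (b * b')\<^sup>2)" for \<nu>
  have "of_real (b'\<^sup>2 * (b' - b)) = - D'"
    by (simp add: D'_def algebra_simps)
  then have R: "kernel_residue_sum b b' \<nu> = A \<nu> + cis (\<nu> * b) / D - cis (\<nu> * b') / D'" for \<nu>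
    unfolding kernel_residue_sum_def A_def D_def by simp
  have shift: "E * cis ((2 * K - lam + 2 * b0) * b) = P * cis (2 * b0 * b)"
    "E * cis ((2 * K - lam) * b) = P" "E * cis ((2 * K - lam - 2 * b0) * b) = P * cis (- (2 * b0 * b))"
    "E * cis ((2 * K - lam + 2 * b0) * b') = P' * cis (2 * b0 * b')"
    "E * cis ((2 * K - lam) * b') = P'" "E * cis ((2 * K - lam - 2 * b0) * b') = P' * cis (- (2 * b0 * b'))"
    unfolding E_def P_def P'_def by (simp_all add: cis_mult algebra_simps)
  have lin: "\<i> * E * (a1 * A (2 * K - lam + 2 * b0) + a2 * A (2 * K - lam) + a3 * A (2 * K - lam - 2 * b0))
      = E / of_real (b * b') * (\<i> * (a1 + a2 + a3) * of_real ((b + b') / (b * b'))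
         - (a1 * of_real (2 * K - lam + 2 * b0) + a2 * of_real (2 * K - lam) + a3 * of_real (2 * K - lam - 2 * b0)))"
  proof -
    have "complex_of_real ((b + b') / (b * b')\<^sup>2) = of_real ((b + b') / (b * b')) / of_real (b * b')"
      by (simp add: power2_eq_square)
    then show ?thesis
      unfolding A_def by (simp add: divide_inverse algebra_simps)
  qed
  have "\<i> * E * (a1 * kernel_residue_sum b b' (2 * K - lam + 2 * b0)
        + a2 * kernel_residue_sum b b' (2 * K - lam) + a3 * kernel_residue_sum b b' (2 * K - lam - 2 * b0))
      = \<i> * E * (a1 * A (2 * K - lam + 2 * b0) + a2 * A (2 * K - lam) + a3 * A (2 * K - lam - 2 * b0))
      + \<i> * (a1 * (E * cis ((2 * K - lam + 2 * b0) * b)) + a2 * (E * cis ((2 * K - lam) * b))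
          + a3 * (E * cis ((2 * K - lam - 2 * b0) * b))) / D
      - \<i> * (a1 * (E * cis ((2 * K - lam + 2 * b0) * b')) + a2 * (E * cis ((2 * K - lam) * b'))
          + a3 * (E * cis ((2 * K - lam - 2 * b0) * b'))) / D'"
    unfolding R by (simp add: divide_inverse algebra_simps)
  from this[unfolded lin shift] show ?thesis
    by (simp add: E_def P_def P'_def D_def D'_def divide_inverse algebra_simps)
qed

lemma h_aux_eq_cis: "h_aux b0 lam x = \<i> * cis (- (lam * x)) * cis (2 * b0 * x) / of_real (x\<^sup>2)"
proof -
  have "cis (- ((lam - 2 * b0) * x)) = cis (- (lam * x)) * cis (2 * b0 * x)"
    by (simp add: cis_mult algebra_simps)
  then show ?thesis
    unfolding h_aux_def exp_minus_i_of_real by (simp add: mult.assoc)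
qed

lemma f_aux_eq_cis: "f_aux b0 lam x = \<i> * cis (- (lam * x)) * (2 - cis (2 * b0 * x)) / of_real (x\<^sup>2)"
proof -
  have "exp (- 2 * \<i> * complex_of_real (b0 * x)) = cis (- (2 * b0 * x))"
    by (simp add: cis_conv_exp algebra_simps)
  moreover have "complex_of_real (4 * (sin (b0 * x))\<^sup>2) = 2 - cis (2 * b0 * x) - cis (- (2 * b0 * x))"
    by (simp only: of_real_mult of_real_sin_sq_eq_cis mult.assoc) simp
  ultimately show ?thesis
    unfolding f_aux_def exp_minus_i_of_real by simp
qed

lemma residue_bracket_G1:
  assumes "b \<noteq> 0" "b' \<noteq> 0" "b \<noteq> b'"
  shows "\<i> * cis (- (K * (b + b'))) * (1 * kernel_residue_sum b b' (2 * K - lam + 2 * b0)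
        + (- 2 * 1) * kernel_residue_sum b b' (2 * K - lam) + 1 * kernel_residue_sum b b' (2 * K - lam - 2 * b0))
     = 4 * \<i> * (exp (- \<i> * complex_of_real (lam * b') - \<i> * complex_of_real (K * (b - b')))
          / complex_of_real (b - b') * complex_of_real ((sin (b0 * b'))\<^sup>2 / b'\<^sup>2)
        - exp (- \<i> * complex_of_real (lam * b) + \<i> * complex_of_real (K * (b - b')))
          / complex_of_real (b - b') * complex_of_real ((sin (b0 * b))\<^sup>2 / b\<^sup>2))"
proof -
  have exps: "exp (- \<i> * complex_of_real (lam * x) - \<i> * complex_of_real (K * (b - b'))) = cis (- (lam * x)) * cis (- (K * (b - b')))"
    "exp (- \<i> * complex_of_real (lam * x) + \<i> * complex_of_real (K * (b - b'))) = cis (- (lam * x)) * cis (K * (b - b'))"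
    for x
    by (simp_all add: cis_conv_exp algebra_simps flip: exp_add)
  have sin_sq: "complex_of_real ((sin (b0 * x))\<^sup>2 / x\<^sup>2) = (2 - cis (2 * b0 * x) - cis (- (2 * b0 * x))) / 4 / of_real (x\<^sup>2)" for x
    by (simp only: of_real_divide of_real_sin_sq_eq_cis mult.assoc)
  define d where "d = complex_of_real (b - b')"
  have "d \<noteq> 0"
    using assms(3) by (simp add: d_def)
  show ?thesis
    unfolding weighted_kernel_residue_sum[OF assms] exps sin_sq
      of_real_mult[of "b\<^sup>2" "b - b'"] of_real_mult[of "b'\<^sup>2" "b - b'"] d_def[symmetric]
    using assms \<open>d \<noteq> 0\<close> by (simp add: field_simps)
qed

lemma residue_bracket_G2:
  assumes "b \<noteq> 0" "b' \<noteq> 0" "b \<noteq> b'"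
  shows "\<i> * cis (- (K * (b + b'))) * (1 * kernel_residue_sum b b' (2 * K - lam + 2 * b0)
        + (- 2 * 1) * kernel_residue_sum b b' (2 * K - lam) + 0 * kernel_residue_sum b b' (2 * K - lam - 2 * b0))
     = f_aux b0 lam b' * exp (- \<i> * complex_of_real (K * (b - b'))) / complex_of_real (b - b')
      - f_aux b0 lam b * exp (\<i> * complex_of_real (K * (b - b'))) / complex_of_real (b - b')
      - phi_aux 1 b0 lam K b b' * exp (- \<i> * complex_of_real (K * (b + b'))) / complex_of_real (b * b')"
proof -
  define d where "d = complex_of_real (b - b')"
  have "d \<noteq> 0"
    using assms(3) by (simp add: d_def)
  show ?thesis
    unfolding weighted_kernel_residue_sum[OF assms] f_aux_eq_cis phi_aux_def exp_i_of_real exp_minus_i_of_real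
      of_real_mult[of "b\<^sup>2" "b - b'"] of_real_mult[of "b'\<^sup>2" "b - b'"] d_def[symmetric]
    using assms \<open>d \<noteq> 0\<close> by (simp add: field_simps)
qed

lemma residue_bracket_G3:
  assumes "b \<noteq> 0" "b' \<noteq> 0" "b \<noteq> b'"
  shows "\<i> * cis (- (K * (b + b'))) * (1 * kernel_residue_sum b b' (2 * K - lam + 2 * b0)
        + (- 2 * 0) * kernel_residue_sum b b' (2 * K - lam) + 0 * kernel_residue_sum b b' (2 * K - lam - 2 * b0))
     = h_aux b0 lam b * exp (\<i> * complex_of_real (K * (b - b'))) / complex_of_real (b - b')
      - h_aux b0 lam b' * exp (- \<i> * complex_of_real (K * (b - b'))) / complex_of_real (b - b')
      + phi_aux (- 1) b0 lam K b b' * exp (- \<i> * complex_of_real (K * (b + b'))) / complex_of_real (b * b')"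
proof -
  define d where "d = complex_of_real (b - b')"
  have "d \<noteq> 0"
    using assms(3) by (simp add: d_def)
  show ?thesis
    unfolding weighted_kernel_residue_sum[OF assms] h_aux_eq_cis phi_aux_def exp_i_of_real exp_minus_i_of_real
      of_real_mult[of "b\<^sup>2" "b - b'"] of_real_mult[of "b'\<^sup>2" "b - b'"] d_def[symmetric]
    using assms \<open>d \<noteq> 0\<close> by (simp add: field_simps)
qed

lemma Spm_eq_G1:
  fixes al g0 k0 b0 lam dt b b' :: real
  defines "K \<equiv> Kc al g0 k0 lam dt"
  assumes "b0 > 0" "lam > 2 * b0" "K > 0" "b \<noteq> 0" "b' \<noteq> 0" "b \<noteq> b'" "lam + 2 * b0 \<le> 2 * K"
  shows "Spm al g0 k0 b0 lam dt b b' = G1 al g0 k0 b0 lam dt b b'"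
proof -
  have scale: "\<i> * of_real (C\<^sup>2 / (2 * b0)) * X = of_real (C\<^sup>2 / (8 * b0)) * (4 * \<i> * X)" for C X
    using assms(2) by (simp add: field_simps)
  have "Spm al g0 k0 b0 lam dt b b' = of_real ((Cc al g0 k0 lam dt)\<^sup>2 / (8 * b0)) * (\<i> * cis (- (K * (b + b'))) *
     (1 * kernel_residue_sum b b' (2 * K - lam + 2 * b0) + (- 2 * 1) * kernel_residue_sum b b' (2 * K - lam)
      + 1 * kernel_residue_sum b b' (2 * K - lam - 2 * b0)))"
    unfolding K_def using assms
    by (intro Spm_eq_residue_combination lower_line_integral_nonneg) (auto simp: K_def)
  then show ?thesis
    unfolding G1_def Let_def K_def[symmetric] scale residue_bracket_G1[OF assms(5-7), symmetric] .
qed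

lemma Spm_eq_G2:
  fixes al g0 k0 b0 lam dt b b' :: real
  defines "K \<equiv> Kc al g0 k0 lam dt"
  assumes "b0 > 0" "lam > 2 * b0" "K > 0" "b \<noteq> 0" "b' \<noteq> 0" "b \<noteq> b'" "lam \<le> 2 * K" "2 * K \<le> lam + 2 * b0"
  shows "Spm al g0 k0 b0 lam dt b b' = G2 al g0 k0 b0 lam dt b b'"
proof -
  have "Spm al g0 k0 b0 lam dt b b' = of_real ((Cc al g0 k0 lam dt)\<^sup>2 / (8 * b0)) * (\<i> * cis (- (K * (b + b'))) *
     (1 * kernel_residue_sum b b' (2 * K - lam + 2 * b0) + (- 2 * 1) * kernel_residue_sum b b' (2 * K - lam)
      + 0 * kernel_residue_sum b b' (2 * K - lam - 2 * b0)))"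
    unfolding K_def using assms
    by (intro Spm_eq_residue_combination lower_line_integral_nonneg lower_line_integral_nonpos) (auto simp: K_def)
  then show ?thesis
    unfolding residue_bracket_G2[OF assms(5-7)] G2_def Let_def K_def[symmetric] .
qed

lemma Spm_eq_G3:
  fixes al g0 k0 b0 lam dt b b' :: real
  defines "K \<equiv> Kc al g0 k0 lam dt"
  assumes "b0 > 0" "lam > 2 * b0" "K > 0" "b \<noteq> 0" "b' \<noteq> 0" "b \<noteq> b'" "lam - 2 * b0 \<le> 2 * K" "2 * K \<le> lam"
  shows "Spm al g0 k0 b0 lam dt b b' = G3 al g0 k0 b0 lam dt b b'"
proof -
  have "Spm al g0 k0 b0 lam dt b b' = of_real ((Cc al g0 k0 lam dt)\<^sup>2 / (8 * b0)) * (\<i> * cis (- (K * (b + b'))) *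
     (1 * kernel_residue_sum b b' (2 * K - lam + 2 * b0) + (- 2 * 0) * kernel_residue_sum b b' (2 * K - lam)
      + 0 * kernel_residue_sum b b' (2 * K - lam - 2 * b0)))"
    unfolding K_def using assms
    by (intro Spm_eq_residue_combination lower_line_integral_nonneg lower_line_integral_nonpos) (auto simp: K_def)
  then show ?thesis
    unfolding residue_bracket_G3[OF assms(5-7)] G3_def Let_def K_def[symmetric] .
qed

lemma Spm_eq_0:
  fixes al g0 k0 b0 lam dt b b' :: real
  defines "K \<equiv> Kc al g0 k0 lam dt"
  assumes "b0 > 0" "lam > 2 * b0" "K > 0" "b \<noteq> 0" "b' \<noteq> 0" "b \<noteq> b'" "2 * K \<le> lam - 2 * b0"
  shows "Spm al g0 k0 b0 lam dt b b' = 0"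
proof -
  have "Spm al g0 k0 b0 lam dt b b' = of_real ((Cc al g0 k0 lam dt)\<^sup>2 / (8 * b0)) * (\<i> * cis (- (K * (b + b'))) *
     (0 * kernel_residue_sum b b' (2 * K - lam + 2 * b0) + (- 2 * 0) * kernel_residue_sum b b' (2 * K - lam)
      + 0 * kernel_residue_sum b b' (2 * K - lam - 2 * b0)))"
    unfolding K_def using assms
    by (intro Spm_eq_residue_combination lower_line_integral_nonpos) (auto simp: K_def)
  then show ?thesis
    by simp
qed

lemma dt_threshold_iff:
  assumes "al > 0" "g0 > 0" "k0 > 0" "lam > 0" "dt > 0" "M > 0"
  shows "dt \<le> 4 * lam * k0 / (al * g0 * M) \<longleftrightarrow> M \<le> 2 * Kc al g0 k0 lam dt"
    and "4 * lam * k0 / (al * g0 * M) \<le> dt \<longleftrightarrow> 2 * Kc al g0 k0 lam dt \<le> M"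
proof -
  have "dt \<le> 4 * lam * k0 / (al * g0 * M) \<longleftrightarrow> M * (al * g0 * dt) \<le> 4 * lam * k0"
    "4 * lam * k0 / (al * g0 * M) \<le> dt \<longleftrightarrow> 4 * lam * k0 \<le> M * (al * g0 * dt)"
    "2 * Kc al g0 k0 lam dt = 4 * lam * k0 / (al * g0 * dt)"
    using assms by (simp_all add: Kc_def le_divide_eq divide_le_eq mult_ac)
  then show "dt \<le> 4 * lam * k0 / (al * g0 * M) \<longleftrightarrow> M \<le> 2 * Kc al g0 k0 lam dt"
    and "4 * lam * k0 / (al * g0 * M) \<le> dt \<longleftrightarrow> 2 * Kc al g0 k0 lam dt \<le> M"
    using assms by (simp_all add: le_divide_eq divide_le_eq)
qed

theorem mainTheorem4:
  fixes al g0 k0 b0 lam dt b b' :: real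
  assumes "al > 0" and "g0 > 0" and "k0 > 0" and "b0 > 0" and "lam > 2 * b0"
    and "dt > 0"
    and "b \<noteq> 0" and "b' \<noteq> 0" and "b \<noteq> b'"
  shows "(dt \<le> 4 * lam * k0 / (al * g0 * (lam + 2 * b0)) \<longrightarrow>
            Spm al g0 k0 b0 lam dt b b' = G1 al g0 k0 b0 lam dt b b')
       \<and> (4 * lam * k0 / (al * g0 * (lam + 2 * b0)) \<le> dt \<and> dt \<le> 4 * k0 / (al * g0) \<longrightarrow>
            Spm al g0 k0 b0 lam dt b b' = G2 al g0 k0 b0 lam dt b b')
       \<and> (4 * k0 / (al * g0) \<le> dt \<and> dt \<le> 4 * lam * k0 / (al * g0 * (lam - 2 * b0)) \<longrightarrow>
            Spm al g0 k0 b0 lam dt b b' = G3 al g0 k0 b0 lam dt b b')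
       \<and> (4 * lam * k0 / (al * g0 * (lam - 2 * b0)) \<le> dt \<longrightarrow>
            Spm al g0 k0 b0 lam dt b b' = 0)"
proof -
  have lam: "lam > 0" "lam + 2 * b0 > 0" "lam - 2 * b0 > 0"
    using assms(4,5) by auto
  have K: "Kc al g0 k0 lam dt > 0"
    unfolding Kc_def using assms lam by simp
  have middle: "4 * k0 / (al * g0) = 4 * lam * k0 / (al * g0 * lam)"
    using lam by simp
  note threshold = dt_threshold_iff[OF assms(1-3) lam(1) assms(6)]
  show ?thesis
    unfolding middle threshold(1,2)[OF lam(2)] threshold(1,2)[OF lam(3)] threshold(1,2)[OF lam(1)]
    using Spm_eq_G1[OF assms(4,5) K assms(7-9)] Spm_eq_G2[OF assms(4,5) K assms(7-9)]
      Spm_eq_G3[OF assms(4,5) K assms(7-9)] Spm_eq_0[OF assms(4,5) K assms(7-9)]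
    by blast
qed

end
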